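(* Let $\mathcal{G}=(\mathcal{V},\mathcal{E})$ be connected, $c\in\mathbb{R}^n$, and $D(y)=-(\mathbf{A}c)^\top y-\tfrac12\|\mathbf{A}^\top y\|^2$ for $y\in\mathbb{R}^m$, with $y^*$ any maximizer of $D$. Let $y^0=0$ and, for $t\ge0$, choose an edge $e\in\mathcal{E}$ uniformly at random (independently across iterations) and set $y^{t+1}=y^t+\lambda^tf_e$ with $\lambda^t=\arg\max_{\lambda\in\mathbb{R}}D(y^t+\lambda f_e)$. (Equivalently, with $x^t=c+\mathbf{A}^\top y^t$, the values at the endpoints of $e$ are replaced by their average.) Then for all $k\ge0$ $$\mathbb{E}[D(y^* )-D(y^k)]\le\Big(1-\frac{\alpha(\mathcal{G})}{2m}\Big)^k\big[D(y^* )-D(y^0)\big].$$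
   Context: $\mathcal{G}$ has $n$ vertices $\mathcal{V}=\{1,\dots,n\}$ and $m=|\mathcal{E}|$ edges. $\mathbf{A}\in\mathbb{R}^{m\times n}$ has, for each edge $e=(i,j)$ (fixed orientation), a row with $1$ in column $i$, $-1$ in column $j$ and zeros elsewhere; $f_e\in\mathbb{R}^m$ is the unit basis vector of edge $e$. The algebraic connectivity $\alpha(\mathcal{G})$ is the second smallest eigenvalue of the Laplacian $\mathbf{L}=\mathbf{A}^\top\mathbf{A}$. $\|\cdot\|$ is the Euclidean norm. *)

theory Defs
  imports "Jordan_Normal_Form.Char_Poly" "HOL-Library.Multiset"
begin

text \<open>A graph on vertices {0..<n} is given by a list E of (oriented) edges (i,j);
  m = length E and edge e is E ! e, with e in {0..<m}.\<close>

definition simple_graph :: "nat \<Rightarrow> (nat \<times> nat) list \<Rightarrow> bool" where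
  "simple_graph n E \<longleftrightarrow>
     (\<forall>(i,j)\<in>set E. i < n \<and> j < n \<and> i \<noteq> j) \<and>
     distinct (map (\<lambda>(i,j). {i,j}) E)"

definition adj :: "(nat \<times> nat) list \<Rightarrow> nat \<Rightarrow> nat \<Rightarrow> bool" where
  "adj E u v \<longleftrightarrow> (\<exists>(i,j)\<in>set E. (u = i \<and> v = j) \<or> (u = j \<and> v = i))"

definition graph_connected :: "nat \<Rightarrow> (nat \<times> nat) list \<Rightarrow> bool" where
  "graph_connected n E \<longleftrightarrow> (\<forall>u<n. \<forall>v<n. (adj E)\<^sup>*\<^sup>* u v)"

definition incidence :: "nat \<Rightarrow> (nat \<times> nat) list \<Rightarrow> real mat" where
  "incidence n E = mat (length E) n
     (\<lambda>(e,k). if k = fst (E ! e) then 1 else if k = snd (E ! e) then -1 else 0)"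

definition laplacian :: "nat \<Rightarrow> (nat \<times> nat) list \<Rightarrow> real mat" where
  "laplacian n E = transpose_mat (incidence n E) * incidence n E"

text \<open>Eigenvalues (with multiplicity) of a real matrix: roots of its characteristic polynomial.
  Algebraic connectivity = second smallest eigenvalue of the Laplacian.\<close>
definition algebraic_connectivity :: "nat \<Rightarrow> (nat \<times> nat) list \<Rightarrow> real" where
  "algebraic_connectivity n E =
     sorted_list_of_multiset (proots (char_poly (laplacian n E))) ! 1"

definition vnorm :: "real vec \<Rightarrow> real" where
  "vnorm v = sqrt (v \<bullet> v)"

definition dualD :: "nat \<Rightarrow> (nat \<times> nat) list \<Rightarrow> real vec \<Rightarrow> real vec \<Rightarrow> real" where
  "dualD n E c y = - ((incidence n E *\<^sub>v c) \<bullet> y)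
                   - 1/2 * (vnorm (transpose_mat (incidence n E) *\<^sub>v y))\<^sup>2"

definition step_size :: "nat \<Rightarrow> (nat \<times> nat) list \<Rightarrow> real vec \<Rightarrow> real vec \<Rightarrow> nat \<Rightarrow> real" where
  "step_size n E c y e = (THE l. \<forall>l'.
      dualD n E c (y + l' \<cdot>\<^sub>v unit_vec (length E) e) \<le> dualD n E c (y + l \<cdot>\<^sub>v unit_vec (length E) e))"

definition cd_step :: "nat \<Rightarrow> (nat \<times> nat) list \<Rightarrow> real vec \<Rightarrow> real vec \<Rightarrow> nat \<Rightarrow> real vec" where
  "cd_step n E c y e = y + step_size n E c y e \<cdot>\<^sub>v unit_vec (length E) e"

definition cd_iter :: "nat \<Rightarrow> (nat \<times> nat) list \<Rightarrow> real vec \<Rightarrow> nat list \<Rightarrow> real vec" where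
  "cd_iter n E c es = foldl (cd_step n E c) (0\<^sub>v (length E)) es"

text \<open>Expectation over k independent uniform edge choices: average over all edge sequences of length k.\<close>
definition expect_k :: "nat \<Rightarrow> nat \<Rightarrow> (nat list \<Rightarrow> real) \<Rightarrow> real" where
  "expect_k m k f = (\<Sum>es\<in>{es. length es = k \<and> set es \<subseteq> {0..<m}}. f es) / real m ^ k"

end

theory Submission
  imports Defs "HOL-Analysis.Function_Topology"
begin

text \<open>
  Write \<open>x = c + A\<^sup>T y\<close>, so that \<open>D(y) = \<parallel>c\<parallel>\<^sup>2/2 - \<parallel>x\<parallel>\<^sup>2/2\<close>. Exact line search along \<open>f\<^sub>e\<close>,
  \<open>e = (i,j)\<close>, replaces \<open>x\<^sub>i, x\<^sub>j\<close> by their average and raises \<open>D\<close> by \<open>(x\<^sub>i - x\<^sub>j)\<^sup>2/4\<close>; hence a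
  uniformly random edge raises \<open>D\<close> in expectation by \<open>x\<^sup>T L x / (4m)\<close>. The sum of the entries of
  \<open>x\<close> never changes, so \<open>D(y) = const - \<parallel>z\<parallel>\<^sup>2/2\<close> for \<open>z\<close> the vector \<open>x\<close> minus its mean, and the
  gap \<open>D(y\<^sup>*) - D(y)\<close> is at most \<open>\<parallel>z\<parallel>\<^sup>2/2\<close>. With the Courant-Fischer bound
  \<open>z\<^sup>T L z \<ge> \<alpha> \<parallel>z\<parallel>\<^sup>2\<close> for centred \<open>z\<close>, the expected gap contracts by \<open>1 - \<alpha>/(2m)\<close> in each step.

  The Courant-Fischer bound is obtained from a minimiser of \<open>z\<^sup>T L z\<close> on the compact set of
  centred unit vectors: a first-variation argument shows that it is an eigenvector, its
  eigenvalue is positive by connectivity, and \<open>0\<close> is also an eigenvalue, so the second smallest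
  eigenvalue \<open>\<alpha>\<close> does not exceed it.
\<close>

section \<open>The dual function in terms of the primal point\<close>

definition incidence_entry :: "(nat \<times> nat) list \<Rightarrow> nat \<Rightarrow> nat \<Rightarrow> real" where
  "incidence_entry E e k = (if k = fst (E ! e) then 1 else if k = snd (E ! e) then -1 else 0)"

definition primal :: "(nat \<times> nat) list \<Rightarrow> real vec \<Rightarrow> real vec \<Rightarrow> nat \<Rightarrow> real" where
  "primal E c y k = c $ k + (\<Sum>e=0..<length E. incidence_entry E e k * y $ e)"

definition sum_sq :: "nat \<Rightarrow> (nat \<Rightarrow> real) \<Rightarrow> real" where
  "sum_sq n x = (\<Sum>k=0..<n. (x k)\<^sup>2)"

definition laplacian_form :: "(nat \<times> nat) list \<Rightarrow> (nat \<Rightarrow> real) \<Rightarrow> real" where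
  "laplacian_form E x = (\<Sum>e=0..<length E. (x (fst (E!e)) - x (snd (E!e)))\<^sup>2)"

lemma incidence_carrier: "incidence n E \<in> carrier_mat (length E) n"
  by (simp add: incidence_def)

lemma incidence_index: "e < length E \<Longrightarrow> k < n \<Longrightarrow> incidence n E $$ (e,k) = incidence_entry E e k"
  by (simp add: incidence_def incidence_entry_def)

lemma simple_graph_edge:
  assumes "simple_graph n E" "e < length E"
  shows "fst (E!e) < n" "snd (E!e) < n" "fst (E!e) \<noteq> snd (E!e)"
proof -
  have "E!e \<in> set E" using assms(2) by simp
  then show "fst (E!e) < n" "snd (E!e) < n" "fst (E!e) \<noteq> snd (E!e)"
    using assms(1) unfolding simple_graph_def by (auto simp: case_prod_beta)
qed

lemma incidence_entry_eq:
  assumes "simple_graph n E" "e < length E"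
  shows "incidence_entry E e k = (if k = fst (E!e) then 1 else 0) - (if k = snd (E!e) then 1 else 0)"
  using simple_graph_edge[OF assms] by (auto simp: incidence_entry_def)

lemma sum_incidence_entry_mult:
  assumes "simple_graph n E" "e < length E"
  shows "(\<Sum>k=0..<n. incidence_entry E e k * f k) = f (fst (E!e)) - f (snd (E!e))"
proof -
  have "(\<Sum>k=0..<n. incidence_entry E e k * f k)
      = (\<Sum>k=0..<n. if k = fst (E!e) then f k else 0) - (\<Sum>k=0..<n. if k = snd (E!e) then f k else 0)"
    unfolding incidence_entry_eq[OF assms] left_diff_distrib
    by (simp add: sum_subtractf if_distrib[of "\<lambda>a. a * f _"] cong: if_cong)
  also have "\<dots> = f (fst (E!e)) - f (snd (E!e))"
    using simple_graph_edge[OF assms] by (simp add: sum.delta')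
  finally show ?thesis .
qed

lemma sum_incidence_entry_sq:
  assumes "simple_graph n E" "e < length E"
  shows "(\<Sum>k=0..<n. (incidence_entry E e k)\<^sup>2) = 2"
  using sum_incidence_entry_mult[OF assms, of "incidence_entry E e"] simple_graph_edge[OF assms]
  by (simp add: power2_eq_square incidence_entry_def)

lemma dualD_eq_primal:
  assumes c: "c \<in> carrier_vec n" and y: "y \<in> carrier_vec (length E)"
  shows "dualD n E c y = 1/2 * sum_sq n (($) c) - 1/2 * sum_sq n (primal E c y)"
proof -
  let ?A = "incidence n E" and ?m = "length E"
  define s where "s k = (\<Sum>e=0..<?m. incidence_entry E e k * y $ e)" for k
  have A: "?A \<in> carrier_mat ?m n" by (rule incidence_carrier)
  have "(?A *\<^sub>v c) \<bullet> y = (\<Sum>e=0..<?m. (\<Sum>k=0..<n. incidence_entry E e k * c $ k) * y $ e)"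
    using A c y by (simp add: scalar_prod_def incidence_index)
  also have "\<dots> = (\<Sum>k=0..<n. c $ k * s k)"
    unfolding s_def sum_distrib_left sum_distrib_right by (subst sum.swap) (simp add: ac_simps)
  finally have linear: "(?A *\<^sub>v c) \<bullet> y = (\<Sum>k=0..<n. c $ k * s k)" .
  have "(vnorm (transpose_mat ?A *\<^sub>v y))\<^sup>2 = (transpose_mat ?A *\<^sub>v y) \<bullet> (transpose_mat ?A *\<^sub>v y)"
    unfolding vnorm_def by (simp add: scalar_prod_def sum_nonneg)
  also have "\<dots> = sum_sq n s"
    using A y unfolding sum_sq_def
    by (simp add: scalar_prod_def s_def incidence_index power2_eq_square)
  finally have quadratic: "(vnorm (transpose_mat ?A *\<^sub>v y))\<^sup>2 = sum_sq n s" .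
  have "sum_sq n (primal E c y) = sum_sq n (($) c) + 2 * (\<Sum>k=0..<n. c $ k * s k) + sum_sq n s"
    unfolding sum_sq_def primal_def s_def[symmetric]
    by (simp add: power2_sum sum.distrib sum_distrib_left mult.assoc)
  then show ?thesis unfolding dualD_def linear quadratic by (simp add: field_simps)
qed

lemma primal_add_unit:
  assumes y: "y \<in> carrier_vec (length E)" and e: "e < length E"
  shows "primal E c (y + l \<cdot>\<^sub>v unit_vec (length E) e) k = primal E c y k + l * incidence_entry E e k"
proof -
  have "(\<Sum>e'=0..<length E. incidence_entry E e' k * (y + l \<cdot>\<^sub>v unit_vec (length E) e) $ e')
      = (\<Sum>e'=0..<length E. incidence_entry E e' k * y $ e' + (if e' = e then l * incidence_entry E e k else 0))"
    by (rule sum.cong) (use y e in \<open>auto simp: algebra_simps\<close>)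
  also have "\<dots> = (\<Sum>e'=0..<length E. incidence_entry E e' k * y $ e') + l * incidence_entry E e k"
    using e by (simp add: sum.distrib sum.delta')
  finally show ?thesis unfolding primal_def by simp
qed

lemma dualD_along_edge:
  assumes G: "simple_graph n E" and c: "c \<in> carrier_vec n" and y: "y \<in> carrier_vec (length E)"
    and e: "e < length E"
  shows "dualD n E c (y + l \<cdot>\<^sub>v unit_vec (length E) e)
       = dualD n E c y - l * (primal E c y (fst (E!e)) - primal E c y (snd (E!e))) - l\<^sup>2"
proof -
  let ?x = "primal E c y" and ?a = "incidence_entry E e"
  have "sum_sq n (primal E c (y + l \<cdot>\<^sub>v unit_vec (length E) e))
      = sum_sq n ?x + 2 * l * (\<Sum>k=0..<n. ?a k * ?x k) + l\<^sup>2 * (\<Sum>k=0..<n. (?a k)\<^sup>2)"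
    unfolding sum_sq_def primal_add_unit[OF y e]
    by (simp add: power2_sum power_mult_distrib sum.distrib sum_distrib_left algebra_simps)
  also have "\<dots> = sum_sq n ?x + 2 * l * (?x (fst (E!e)) - ?x (snd (E!e))) + 2 * l\<^sup>2"
    using sum_incidence_entry_mult[OF G e] sum_incidence_entry_sq[OF G e] by simp
  finally show ?thesis
    using y by (simp add: dualD_eq_primal[OF c] algebra_simps)
qed

lemma step_size_eq:
  assumes G: "simple_graph n E" and c: "c \<in> carrier_vec n" and y: "y \<in> carrier_vec (length E)"
    and e: "e < length E"
  shows "step_size n E c y e = - (primal E c y (fst (E!e)) - primal E c y (snd (E!e))) / 2"
proof -
  define d where "d = primal E c y (fst (E!e)) - primal E c y (snd (E!e))"
  have along: "dualD n E c (y + l \<cdot>\<^sub>v unit_vec (length E) e) = dualD n E c y + d\<^sup>2/4 - (l + d/2)\<^sup>2" for l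
    unfolding dualD_along_edge[OF G c y e] d_def[symmetric] by (simp add: power2_eq_square field_simps)
  show ?thesis unfolding step_size_def d_def[symmetric]
  proof (rule the_equality)
    fix l
    assume "\<forall>l'. dualD n E c (y + l' \<cdot>\<^sub>v unit_vec (length E) e) \<le> dualD n E c (y + l \<cdot>\<^sub>v unit_vec (length E) e)"
    from this[rule_format, of "- d/2"] have "(l + d/2)\<^sup>2 \<le> 0" unfolding along by simp
    then show "l = - d / 2" by (simp add: eq_neg_iff_add_eq_0)
  qed (simp add: along)
qed

lemma dualD_cd_step:
  assumes G: "simple_graph n E" and c: "c \<in> carrier_vec n" and y: "y \<in> carrier_vec (length E)"
    and e: "e < length E"
  shows "dualD n E c (cd_step n E c y e)
       = dualD n E c y + (primal E c y (fst (E!e)) - primal E c y (snd (E!e)))\<^sup>2 / 4"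
  unfolding cd_step_def dualD_along_edge[OF G c y e] step_size_eq[OF G c y e]
  by (simp add: power2_eq_square field_simps)

lemma cd_iter_carrier: "cd_iter n E c es \<in> carrier_vec (length E)"
proof -
  have "foldl (cd_step n E c) y es \<in> carrier_vec (length E)" if "y \<in> carrier_vec (length E)" for y
    using that by (induction es arbitrary: y) (auto simp: cd_step_def)
  then show ?thesis unfolding cd_iter_def by simp
qed

lemma cd_iter_snoc: "cd_iter n E c (es @ [e]) = cd_step n E c (cd_iter n E c es) e"
  unfolding cd_iter_def by simp

lemma sum_dualD_cd_step:
  assumes G: "simple_graph n E" and c: "c \<in> carrier_vec n" and y: "y \<in> carrier_vec (length E)"
  shows "(\<Sum>e=0..<length E. dualD n E c (cd_step n E c y e))
       = real (length E) * dualD n E c y + laplacian_form E (primal E c y) / 4"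
  unfolding laplacian_form_def
  by (simp add: dualD_cd_step[OF G c y] sum.distrib sum_divide_distrib)

section \<open>Centring\<close>

definition mean :: "nat \<Rightarrow> (nat \<Rightarrow> real) \<Rightarrow> real" where
  "mean n x = (\<Sum>k=0..<n. x k) / real n"

lemma sum_sq_centred:
  assumes "n > 0"
  shows "sum_sq n (\<lambda>k. x k - mean n x) = sum_sq n x - real n * (mean n x)\<^sup>2"
proof -
  have sum_x: "(\<Sum>k=0..<n. x k) = real n * mean n x"
    using assms by (simp add: mean_def)
  have "sum_sq n (\<lambda>k. x k - mean n x)
      = sum_sq n x - 2 * mean n x * (\<Sum>k=0..<n. x k) + real n * (mean n x)\<^sup>2"
    unfolding sum_sq_def
    by (simp add: power2_diff sum.distrib sum_subtractf sum_distrib_left algebra_simps)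
  then show ?thesis unfolding sum_x by (simp add: power2_eq_square)
qed

lemma sum_primal:
  assumes G: "simple_graph n E"
  shows "(\<Sum>k=0..<n. primal E c y k) = (\<Sum>k=0..<n. c $ k)"
proof -
  have "(\<Sum>k=0..<n. \<Sum>e=0..<length E. incidence_entry E e k * y $ e)
      = (\<Sum>e=0..<length E. (\<Sum>k=0..<n. incidence_entry E e k * 1) * y $ e)"
    by (subst sum.swap) (simp add: sum_distrib_right)
  also have "\<dots> = 0" using sum_incidence_entry_mult[OF G, of _ "\<lambda>_. 1"] by simp
  finally show ?thesis unfolding primal_def by (simp add: sum.distrib)
qed

lemma mean_primal: "simple_graph n E \<Longrightarrow> mean n (primal E c y) = mean n (($) c)"
  by (simp add: mean_def sum_primal)

lemma dualD_centred:
  assumes G: "simple_graph n E" and n: "n > 0" and c: "c \<in> carrier_vec n"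
    and y: "y \<in> carrier_vec (length E)"
  shows "dualD n E c y = 1/2 * sum_sq n (\<lambda>k. c $ k - mean n (($) c))
                        - 1/2 * sum_sq n (\<lambda>k. primal E c y k - mean n (($) c))"
  using sum_sq_centred[OF n, of "($) c"] sum_sq_centred[OF n, of "primal E c y"]
  by (simp add: dualD_eq_primal[OF c y] mean_primal[OF G] field_simps)

lemma dual_gap_le_centred:
  assumes G: "simple_graph n E" and n: "n > 0" and c: "c \<in> carrier_vec n"
    and y: "y \<in> carrier_vec (length E)" and y': "y' \<in> carrier_vec (length E)"
  shows "dualD n E c y' - dualD n E c y \<le> 1/2 * sum_sq n (\<lambda>k. primal E c y k - mean n (($) c))"
proof -
  have "sum_sq n (\<lambda>k. primal E c y' k - mean n (($) c)) \<ge> 0"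
    unfolding sum_sq_def by (simp add: sum_nonneg)
  then show ?thesis by (simp add: dualD_centred[OF G n c y] dualD_centred[OF G n c y'])
qed

lemma sum_centred_primal:
  "simple_graph n E \<Longrightarrow> n > 0 \<Longrightarrow> (\<Sum>k=0..<n. primal E c y k - mean n (($) c)) = 0"
  by (simp add: sum_subtractf sum_primal mean_def)

lemma laplacian_form_shift: "laplacian_form E (\<lambda>k. x k - a) = laplacian_form E x"
  unfolding laplacian_form_def by simp

section \<open>The Courant-Fischer bound\<close>

lemma sum_sq_nonneg: "sum_sq n x \<ge> 0"
  unfolding sum_sq_def by (simp add: sum_nonneg)

lemma laplacian_form_nonneg: "laplacian_form E x \<ge> 0"
  unfolding laplacian_form_def by (simp add: sum_nonneg)

lemma laplacian_carrier: "laplacian n E \<in> carrier_mat n n"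
  unfolding laplacian_def using incidence_carrier[of n E] by auto

lemma laplacian_mult_vec_index:
  assumes G: "simple_graph n E" and k: "k < n"
  shows "(laplacian n E *\<^sub>v vec n z) $ k
       = (\<Sum>e=0..<length E. incidence_entry E e k * (z (fst (E!e)) - z (snd (E!e))))"
proof -
  let ?A = "incidence n E"
  have A: "?A \<in> carrier_mat (length E) n" by (rule incidence_carrier)
  have "laplacian n E *\<^sub>v vec n z = transpose_mat ?A *\<^sub>v (?A *\<^sub>v vec n z)"
    unfolding laplacian_def using A by (intro assoc_mult_mat_vec) auto
  moreover have "(?A *\<^sub>v vec n z) $ e = z (fst (E!e)) - z (snd (E!e))" if "e < length E" for e
    using that A sum_incidence_entry_mult[OF G that, of z]
    by (simp add: scalar_prod_def incidence_index)
  ultimately show ?thesis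
    using k A by (simp add: scalar_prod_def incidence_index)
qed

lemma laplacian_eigenvalueI:
  assumes G: "simple_graph n E"
    and eq: "\<And>k. k < n \<Longrightarrow> (\<Sum>e=0..<length E. incidence_entry E e k * (z (fst (E!e)) - z (snd (E!e)))) = \<mu> * z k"
    and nonzero: "k0 < n" "z k0 \<noteq> 0"
  shows "eigenvalue (laplacian n E) \<mu>"
proof -
  have L: "laplacian n E \<in> carrier_mat n n" by (rule laplacian_carrier)
  have "vec n z \<noteq> 0\<^sub>v n"
    using nonzero by (metis index_vec index_zero_vec(1))
  moreover have "laplacian n E *\<^sub>v vec n z = \<mu> \<cdot>\<^sub>v vec n z"
  proof (rule eq_vecI)
    fix i assume "i < dim_vec (\<mu> \<cdot>\<^sub>v vec n z)"
    then show "(laplacian n E *\<^sub>v vec n z) $ i = (\<mu> \<cdot>\<^sub>v vec n z) $ i"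
      using laplacian_mult_vec_index[OF G, of i z] eq[of i] by simp
  qed (use L in simp)
  ultimately show ?thesis
    using L unfolding eigenvalue_def eigenvector_def by (intro exI[of _ "vec n z"]) auto
qed

lemma laplacian_eigenvalue_zero:
  "simple_graph n E \<Longrightarrow> n > 0 \<Longrightarrow> eigenvalue (laplacian n E) 0"
  by (rule laplacian_eigenvalueI[of _ _ "\<lambda>_. 1" _ 0]) auto

lemma sorted_nth_1_le:
  fixes s :: "'a::linorder list"
  assumes "sorted s" "a \<in> set s" "b \<in> set s" "a < b"
  shows "s ! 1 \<le> b"
proof -
  obtain p q where p: "p < length s" "s ! p = b" and q: "q < length s" "s ! q = a"
    using assms(2,3) by (auto simp: in_set_conv_nth)
  show ?thesis
  proof (cases "p = 0")
    case True
    then show ?thesis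
      using assms(1,4) p q sorted_nth_mono[of s 0 q] by simp
  next
    case False
    then show ?thesis
      using assms(1) p sorted_nth_mono[of s 1 p] by simp
  qed
qed

lemma algebraic_connectivity_le:
  assumes G: "simple_graph n E" and n: "n > 0"
    and ev: "eigenvalue (laplacian n E) \<mu>" and pos: "\<mu> > 0"
  shows "algebraic_connectivity n E \<le> \<mu>"
proof -
  have L: "laplacian n E \<in> carrier_mat n n" by (rule laplacian_carrier)
  let ?p = "char_poly (laplacian n E)"
  have "?p \<noteq> 0" using degree_monic_char_poly[OF L] by auto
  moreover have "poly ?p \<mu> = 0" "poly ?p 0 = 0"
    using ev laplacian_eigenvalue_zero[OF G n] eigenvalue_root_char_poly[OF L] by simp_all
  ultimately have "\<mu> \<in># proots ?p" "0 \<in># proots ?p" by auto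
  then show ?thesis unfolding algebraic_connectivity_def
    by (intro sorted_nth_1_le[of _ 0]) (use pos in auto)
qed

text \<open>Vectors are modelled as functions \<open>nat \<Rightarrow> real\<close>; pinning the coordinates beyond \<open>n\<close> to \<open>0\<close>
  makes the set of centred unit vectors compact in the product topology.\<close>

definition centred_unit_vectors :: "nat \<Rightarrow> (nat \<Rightarrow> real) set" where
  "centred_unit_vectors n = Pi\<^sub>E UNIV (\<lambda>i. if i < n then {-1..1} else {0})
     \<inter> {x. (\<Sum>k=0..<n. x k) = 0} \<inter> {x. sum_sq n x = 1}"

lemma compact_centred_unit_vectors: "compact (centred_unit_vectors n)"
proof -
  have "compactin (product_topology (\<lambda>_. euclidean) UNIV) (Pi\<^sub>E UNIV (\<lambda>i. if i < n then {-1..1::real} else {0}))"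
    unfolding compactin_PiE by (auto simp: compactin_euclidean_iff)
  then have box: "compact (Pi\<^sub>E UNIV (\<lambda>i. if i < n then {-1..1::real} else {0}))"
    unfolding euclidean_product_topology compactin_euclidean_iff .
  have "continuous_on UNIV (\<lambda>x::nat\<Rightarrow>real. \<Sum>k=0..<n. x k)"
    by (intro continuous_on_sum) simp
  then have "closed {x::nat\<Rightarrow>real. (\<Sum>k=0..<n. x k) = 0}"
    using closed_Collect_eq[OF _ continuous_on_const] by simp
  moreover have "continuous_on UNIV (sum_sq n)"
    unfolding sum_sq_def by (intro continuous_on_sum continuous_on_power) simp
  then have "closed {x. sum_sq n x = 1}"
    using closed_Collect_eq[OF _ continuous_on_const] by simp
  ultimately show ?thesis unfolding centred_unit_vectors_def
    by (intro compact_Int_closed box) auto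
qed

lemma continuous_on_laplacian_form: "continuous_on S (laplacian_form E)"
  unfolding laplacian_form_def
  by (intro continuous_on_sum continuous_on_power continuous_on_diff
      continuous_on_subset[OF continuous_on_product_coordinates]) auto

definition dipole :: "nat \<Rightarrow> real" where
  "dipole i = (if i = 0 then 1 / sqrt 2 else 0) - (if i = 1 then 1 / sqrt 2 else 0)"

lemma dipole_sq: "(dipole i)\<^sup>2 = (if i = 0 then 1/2 else 0) + (if i = 1 then 1/2 else 0)"
  by (auto simp: dipole_def power2_eq_square)

lemma dipole_in_centred_unit_vectors:
  assumes n: "n \<ge> 2"
  shows "dipole \<in> centred_unit_vectors n"
proof -
  have "(\<Sum>k=0..<n. dipole k) = 0" "sum_sq n dipole = 1"
    unfolding sum_sq_def dipole_sq using n by (simp_all add: dipole_def sum_subtractf sum.distrib)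
  moreover have "dipole i \<in> (if i < n then {-1..1} else {0})" for i
    using n real_sqrt_ge_one[of 2] unfolding dipole_def by (auto intro: order.trans[of _ 0])
  ultimately show ?thesis unfolding centred_unit_vectors_def by (auto simp: PiE_iff)
qed

lemma laplacian_form_dipole: "laplacian_form E dipole \<le> 2 * real (length E)"
proof -
  have "(dipole a - dipole b)\<^sup>2 \<le> 2" for a b
  proof -
    have "(dipole a - dipole b)\<^sup>2 \<le> 2 * (dipole a)\<^sup>2 + 2 * (dipole b)\<^sup>2"
      using zero_le_power2[of "dipole a + dipole b"] by (simp add: power2_eq_square algebra_simps)
    then show ?thesis unfolding dipole_sq by (auto split: if_split_asm)
  qed
  then have "laplacian_form E dipole \<le> (\<Sum>e=0..<length E. 2)"
    unfolding laplacian_form_def by (intro sum_mono) auto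
  then show ?thesis by simp
qed

lemma laplacian_form_attains_min:
  assumes "n \<ge> 2"
  shows "\<exists>z\<in>centred_unit_vectors n. \<forall>w\<in>centred_unit_vectors n. laplacian_form E z \<le> laplacian_form E w"
  using continuous_attains_inf[OF compact_centred_unit_vectors _ continuous_on_laplacian_form]
    dipole_in_centred_unit_vectors[OF assms] by blast

lemma laplacian_form_scale:
  assumes G: "simple_graph n E" and "\<And>i. i < n \<Longrightarrow> w' i = w i / s"
  shows "laplacian_form E w' = laplacian_form E w / s\<^sup>2"
proof -
  have "laplacian_form E w' = (\<Sum>e=0..<length E. (w (fst (E!e)) - w (snd (E!e)))\<^sup>2 / s\<^sup>2)"
    unfolding laplacian_form_def
    by (rule sum.cong) (use assms simple_graph_edge[OF G] in \<open>auto simp: diff_divide_distrib[symmetric] power_divide\<close>)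
  then show ?thesis unfolding laplacian_form_def by (simp add: sum_divide_distrib)
qed

lemma min_laplacian_form_bound:
  assumes G: "simple_graph n E" and z: "z \<in> centred_unit_vectors n"
    and z_min: "\<forall>w\<in>centred_unit_vectors n. laplacian_form E z \<le> laplacian_form E w"
    and w: "(\<Sum>k=0..<n. w k) = 0"
  shows "laplacian_form E z * sum_sq n w \<le> laplacian_form E w"
proof (cases "sum_sq n w = 0")
  case True
  then show ?thesis using laplacian_form_nonneg by simp
next
  case False
  then have pos: "sum_sq n w > 0" using sum_sq_nonneg[of n w] by simp
  define s where "s = sqrt (sum_sq n w)"
  have s: "s > 0" "s\<^sup>2 = sum_sq n w" using pos unfolding s_def by auto
  define w' where "w' i = (if i < n then w i / s else 0)" for i
  have bound: "\<bar>w i\<bar> \<le> s" if "i < n" for i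
  proof -
    have "(w i)\<^sup>2 \<le> sum_sq n w" unfolding sum_sq_def using that by (intro member_le_sum) auto
    then show ?thesis unfolding s_def by (metis real_sqrt_abs real_sqrt_le_mono)
  qed
  have "w' i \<in> (if i < n then {-1..1} else {0})" for i
    using bound[of i] s by (auto simp: w'_def abs_le_iff field_simps)
  moreover have "(\<Sum>k=0..<n. w' k) = 0"
    unfolding w'_def using w by (simp add: sum_divide_distrib[symmetric])
  moreover have "sum_sq n w' = 1" unfolding sum_sq_def w'_def using s pos
    by (simp add: power_divide sum_divide_distrib[symmetric] sum_sq_def[symmetric])
  ultimately have "w' \<in> centred_unit_vectors n"
    unfolding centred_unit_vectors_def by (auto simp: PiE_iff)
  then have "laplacian_form E z \<le> laplacian_form E w'" using z_min by blast
  also have "laplacian_form E w' = laplacian_form E w / sum_sq n w"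
    using laplacian_form_scale[OF G, of w' w s] s by (simp add: w'_def)
  finally show ?thesis using pos by (simp add: field_simps)
qed

lemma linear_coeff_zero_if_nonneg:
  fixes a b :: real
  assumes "\<And>t. 0 \<le> a * t + b * t\<^sup>2"
  shows "a = 0"
proof (rule ccontr)
  assume a: "a \<noteq> 0"
  define c where "c = \<bar>b\<bar> + 1"
  have c: "c > 0" "b \<le> c" unfolding c_def by auto
  define t where "t = - a / (2 * c)"
  have "b * t\<^sup>2 \<le> c * t\<^sup>2" using c by (intro mult_right_mono) auto
  moreover have "a * t + c * t\<^sup>2 = - (a\<^sup>2 / (4 * c))"
    unfolding t_def using c by (simp add: power2_eq_square field_simps)
  moreover have "a\<^sup>2 / (4 * c) > 0" using a c by simp
  ultimately show False using assms[of t] by linarith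
qed

lemma laplacian_form_add_scaled:
  "laplacian_form E (\<lambda>k. z k + t * w k) = laplacian_form E z
     + 2 * t * (\<Sum>e=0..<length E. (z (fst (E!e)) - z (snd (E!e))) * (w (fst (E!e)) - w (snd (E!e))))
     + t\<^sup>2 * laplacian_form E w"
proof -
  have "laplacian_form E (\<lambda>k. z k + t * w k) = (\<Sum>e=0..<length E. (z (fst (E!e)) - z (snd (E!e)))\<^sup>2
     + 2 * t * ((z (fst (E!e)) - z (snd (E!e))) * (w (fst (E!e)) - w (snd (E!e))))
     + t\<^sup>2 * (w (fst (E!e)) - w (snd (E!e)))\<^sup>2)"
    unfolding laplacian_form_def by (rule sum.cong) (simp_all add: power2_eq_square algebra_simps)
  then show ?thesis unfolding laplacian_form_def by (simp add: sum.distrib sum_distrib_left)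
qed

lemma sum_sq_add_scaled:
  "sum_sq n (\<lambda>k. z k + t * w k) = sum_sq n z + 2 * t * (\<Sum>k=0..<n. z k * w k) + t\<^sup>2 * sum_sq n w"
proof -
  have "sum_sq n (\<lambda>k. z k + t * w k) = (\<Sum>k=0..<n. (z k)\<^sup>2 + 2 * t * (z k * w k) + t\<^sup>2 * (w k)\<^sup>2)"
    unfolding sum_sq_def by (rule sum.cong) (simp_all add: power2_eq_square algebra_simps)
  then show ?thesis unfolding sum_sq_def by (simp add: sum.distrib sum_distrib_left)
qed

text \<open>First variation of the Rayleigh quotient at the minimiser \<open>z\<close>, in the centred direction
  \<open>e\<^sub>k - 1/n\<close>.\<close>

lemma min_laplacian_form_eigen_eq:
  assumes G: "simple_graph n E" and k: "k < n" and z: "z \<in> centred_unit_vectors n"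
    and z_min: "\<forall>w\<in>centred_unit_vectors n. laplacian_form E z \<le> laplacian_form E w"
  shows "(\<Sum>e=0..<length E. incidence_entry E e k * (z (fst (E!e)) - z (snd (E!e))))
       = laplacian_form E z * z k"
proof -
  let ?\<mu> = "laplacian_form E z"
  define w where "w i = (if i = k then 1 else 0) - 1 / real n" for i
  define B where "B = (\<Sum>e=0..<length E. (z (fst (E!e)) - z (snd (E!e))) * (w (fst (E!e)) - w (snd (E!e))))"
  define I where "I = (\<Sum>i=0..<n. z i * w i)"
  have z_sum: "(\<Sum>i=0..<n. z i) = 0" and z_sq: "sum_sq n z = 1"
    using z unfolding centred_unit_vectors_def by auto
  have w_sum: "(\<Sum>i=0..<n. w i) = 0" unfolding w_def using k by (simp add: sum_subtractf)
  have variation: "0 \<le> 2 * (B - ?\<mu> * I) * t + (laplacian_form E w - ?\<mu> * sum_sq n w) * t\<^sup>2" for t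
  proof -
    have "(\<Sum>i=0..<n. z i + t * w i) = 0"
      using z_sum w_sum by (simp add: sum.distrib sum_distrib_left[symmetric])
    from min_laplacian_form_bound[OF G z z_min this]
    show ?thesis
      unfolding laplacian_form_add_scaled sum_sq_add_scaled B_def[symmetric] I_def[symmetric] z_sq
      by (simp add: algebra_simps)
  qed
  have "2 * (B - ?\<mu> * I) = 0" by (rule linear_coeff_zero_if_nonneg) (fact variation)
  moreover have "B = (\<Sum>e=0..<length E. incidence_entry E e k * (z (fst (E!e)) - z (snd (E!e))))"
    unfolding B_def by (rule sum.cong) (auto simp: w_def incidence_entry_eq[OF G])
  moreover have "I = z k"
  proof -
    have "z i * w i = (if i = k then z i else 0) - z i / real n" for i
      unfolding w_def by (simp add: right_diff_distrib)
    then have "I = (\<Sum>i=0..<n. if i = k then z i else 0) - (\<Sum>i=0..<n. z i) / real n"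
      unfolding I_def by (simp add: sum_subtractf sum_divide_distrib)
    then show ?thesis using k z_sum by simp
  qed
  ultimately show ?thesis by simp
qed

lemma constant_on_connected:
  assumes C: "graph_connected n E" and eq: "\<forall>e<length E. z (fst (E!e)) = z (snd (E!e))"
    and "u < n" "v < n"
  shows "z u = z v"
proof -
  have "z u = z v" if "(adj E)\<^sup>*\<^sup>* u v" for u v
    using that
  proof (induction rule: rtranclp_induct)
    case (step v w)
    then obtain i j where ij: "(i,j) \<in> set E" "(v = i \<and> w = j) \<or> (v = j \<and> w = i)"
      unfolding adj_def by blast
    then obtain e where e: "e < length E" "E!e = (i,j)" by (auto simp: in_set_conv_nth)
    have "z i = z j" using eq[rule_format, OF e(1)] e(2) by simp
    then show ?case using ij(2) step.IH by auto
  qed simp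
  then show ?thesis using C assms(3,4) unfolding graph_connected_def by blast
qed

lemma laplacian_form_pos:
  assumes C: "graph_connected n E" and n: "n > 0" and z: "z \<in> centred_unit_vectors n"
  shows "laplacian_form E z > 0"
proof (rule ccontr)
  assume "\<not> laplacian_form E z > 0"
  then have "laplacian_form E z = 0" using laplacian_form_nonneg[of E z] by simp
  then have "\<forall>e\<in>{0..<length E}. (z (fst (E!e)) - z (snd (E!e)))\<^sup>2 = 0"
    unfolding laplacian_form_def by (subst (asm) sum_nonneg_eq_0_iff) auto
  then have "\<forall>e<length E. z (fst (E!e)) = z (snd (E!e))" by auto
  note const = constant_on_connected[OF C this _ n]
  have "(\<Sum>i=0..<n. z i) = (\<Sum>i=0..<n. z 0)" "sum_sq n z = (\<Sum>i=0..<n. (z 0)\<^sup>2)"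
    unfolding sum_sq_def by (intro sum.cong refl; metis atLeastLessThan_iff const)+
  moreover have "(\<Sum>i=0..<n. z i) = 0" "sum_sq n z = 1"
    using z unfolding centred_unit_vectors_def by auto
  ultimately show False by auto
qed

lemma courant_fischer_bound:
  assumes n: "n \<ge> 2" and G: "simple_graph n E" and C: "graph_connected n E"
  obtains \<mu> where "algebraic_connectivity n E \<le> \<mu>" "0 \<le> \<mu>" "\<mu> \<le> 2 * real (length E)"
    and "\<And>z. (\<Sum>k=0..<n. z k) = 0 \<Longrightarrow> \<mu> * sum_sq n z \<le> laplacian_form E z"
proof -
  obtain z where z: "z \<in> centred_unit_vectors n"
    and z_min: "\<forall>w\<in>centred_unit_vectors n. laplacian_form E z \<le> laplacian_form E w"
    using laplacian_form_attains_min[OF n] by blast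
  have n0: "n > 0" using n by simp
  have pos: "laplacian_form E z > 0" by (rule laplacian_form_pos[OF C n0 z])
  have "\<exists>k0<n. z k0 \<noteq> 0"
  proof (rule ccontr)
    assume "\<not> (\<exists>k0<n. z k0 \<noteq> 0)"
    then have "sum_sq n z = 0" unfolding sum_sq_def by simp
    then show False using z unfolding centred_unit_vectors_def by simp
  qed
  then obtain k0 where k0: "k0 < n" "z k0 \<noteq> 0" by blast
  show ?thesis
  proof (rule that)
    have "eigenvalue (laplacian n E) (laplacian_form E z)"
      by (rule laplacian_eigenvalueI[OF G min_laplacian_form_eigen_eq[OF G _ z z_min] k0])
    then show "algebraic_connectivity n E \<le> laplacian_form E z"
      by (rule algebraic_connectivity_le[OF G n0 _ pos])
    have "laplacian_form E z \<le> laplacian_form E dipole"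
      using z_min dipole_in_centred_unit_vectors[OF n] by blast
    then show "laplacian_form E z \<le> 2 * real (length E)"
      using laplacian_form_dipole[of E] by linarith
  qed (use pos min_laplacian_form_bound[OF G z z_min] in auto)
qed

section \<open>Expectation over random edge sequences\<close>

definition edge_seqs :: "nat \<Rightarrow> nat \<Rightarrow> nat list set" where
  "edge_seqs m k = {es. length es = k \<and> set es \<subseteq> {0..<m}}"

lemma edge_seqs_Suc: "edge_seqs m (Suc k) = (\<lambda>(es,e). es @ [e]) ` (edge_seqs m k \<times> {0..<m})"
proof
  show "edge_seqs m (Suc k) \<subseteq> (\<lambda>(es,e). es @ [e]) ` (edge_seqs m k \<times> {0..<m})"
  proof
    fix xs assume xs: "xs \<in> edge_seqs m (Suc k)"
    then have "xs \<noteq> []" unfolding edge_seqs_def by auto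
    then have "xs = butlast xs @ [last xs]" by simp
    moreover have "butlast xs \<in> edge_seqs m k" "last xs \<in> {0..<m}"
      using xs last_in_set[OF \<open>xs \<noteq> []\<close>] unfolding edge_seqs_def by (auto dest: in_set_butlastD)
    ultimately show "xs \<in> (\<lambda>(es,e). es @ [e]) ` (edge_seqs m k \<times> {0..<m})"
      by (metis (no_types, lifting) SigmaI case_prod_conv image_eqI)
  qed
qed (auto simp: edge_seqs_def)

lemma expect_k_edge_seqs: "expect_k m k f = (\<Sum>es\<in>edge_seqs m k. f es) / real m ^ k"
  unfolding expect_k_def edge_seqs_def by simp

lemma expect_k_Suc:
  assumes m: "m > 0"
  shows "expect_k m (Suc k) f = expect_k m k (\<lambda>es. (\<Sum>e=0..<m. f (es @ [e])) / real m)"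
proof -
  have "inj_on (\<lambda>(es,e). es @ [e]) (edge_seqs m k \<times> {0..<m})"
    by (auto simp: inj_on_def)
  then have "(\<Sum>es\<in>edge_seqs m (Suc k). f es) = (\<Sum>(es,e)\<in>edge_seqs m k \<times> {0..<m}. f (es @ [e]))"
    unfolding edge_seqs_Suc by (subst sum.reindex) (auto intro: sum.cong)
  also have "\<dots> = (\<Sum>es\<in>edge_seqs m k. \<Sum>e=0..<m. f (es @ [e]))"
    by (rule sum.cartesian_product[symmetric])
  finally show ?thesis
    unfolding expect_k_edge_seqs using m by (simp add: sum_divide_distrib[symmetric] field_simps)
qed

lemma expect_k_contraction:
  assumes m: "m > 0" and r: "r \<ge> 0"
    and step: "\<And>es. (\<Sum>e=0..<m. g (es @ [e])) / real m \<le> r * g es"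
  shows "expect_k m k g \<le> r ^ k * g []"
proof (induction k)
  case 0
  have "edge_seqs m 0 = {[]}" unfolding edge_seqs_def by auto
  then show ?case unfolding expect_k_edge_seqs by simp
next
  case (Suc k)
  have "expect_k m (Suc k) g = expect_k m k (\<lambda>es. (\<Sum>e=0..<m. g (es @ [e])) / real m)"
    by (rule expect_k_Suc[OF m])
  also have "\<dots> \<le> expect_k m k (\<lambda>es. r * g es)"
    unfolding expect_k_edge_seqs using m step by (intro divide_right_mono sum_mono) auto
  also have "\<dots> = r * expect_k m k g"
    unfolding expect_k_edge_seqs by (simp add: sum_distrib_left)
  also have "\<dots> \<le> r * (r ^ k * g [])" using Suc r by (intro mult_left_mono)
  finally show ?case by simp
qed

lemma expected_dual_gap_step:
  assumes G: "simple_graph n E" and n: "n > 0" and c: "c \<in> carrier_vec n"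
    and y: "y \<in> carrier_vec (length E)" and y_opt: "y' \<in> carrier_vec (length E)"
    and opt: "\<forall>y\<in>carrier_vec (length E). dualD n E c y \<le> dualD n E c y'"
    and m: "length E > 0" and \<mu>: "a \<le> \<mu>" "0 \<le> \<mu>"
    and bound: "\<And>z. (\<Sum>k=0..<n. z k) = 0 \<Longrightarrow> \<mu> * sum_sq n z \<le> laplacian_form E z"
  shows "(\<Sum>e=0..<length E. dualD n E c y' - dualD n E c (cd_step n E c y e)) / real (length E)
       \<le> (1 - a / (2 * real (length E))) * (dualD n E c y' - dualD n E c y)"
proof -
  let ?m = "real (length E)"
  define z where "z k = primal E c y k - mean n (($) c)" for k
  define gap where "gap = dualD n E c y' - dualD n E c y"
  have "gap \<ge> 0" using opt y unfolding gap_def by auto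
  then have "a * gap \<le> \<mu> * gap" using \<mu> by (intro mult_right_mono)
  also have "\<mu> * gap \<le> 1/2 * (\<mu> * sum_sq n z)"
    using mult_left_mono[OF dual_gap_le_centred[OF G n c y y_opt] \<mu>(2)]
    unfolding gap_def z_def by simp
  also have "\<dots> \<le> 1/2 * laplacian_form E z"
    using bound sum_centred_primal[OF G n] unfolding z_def by simp
  finally have "a * gap \<le> laplacian_form E (primal E c y) / 2"
    unfolding z_def laplacian_form_shift by simp
  moreover have "(\<Sum>e=0..<length E. dualD n E c y' - dualD n E c (cd_step n E c y e))
      = ?m * gap - laplacian_form E (primal E c y) / 4"
    unfolding sum_subtractf sum_dualD_cd_step[OF G c y] gap_def by (simp add: algebra_simps)
  ultimately show ?thesis
    using m unfolding gap_def[symmetric] by (simp add: field_simps)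
qed

lemma edges_nonempty:
  assumes n: "n \<ge> 2" and C: "graph_connected n E"
  shows "length E > 0"
proof -
  have "(adj E)\<^sup>*\<^sup>* 0 1" using C n unfolding graph_connected_def by auto
  then obtain v where "adj E 0 v" by (metis converse_rtranclpE zero_neq_one)
  then show ?thesis unfolding adj_def by (metis length_pos_if_in_set case_prodE)
qed

theorem mainTheorem17:
  fixes n :: nat and E :: "(nat \<times> nat) list" and c ystar :: "real vec" and k :: nat
  assumes "n \<ge> 2"
    and "simple_graph n E"
    and "graph_connected n E"
    and "c \<in> carrier_vec n"
    and "ystar \<in> carrier_vec (length E)"
    and "\<forall>y\<in>carrier_vec (length E). dualD n E c y \<le> dualD n E c ystar"
  shows "expect_k (length E) k (\<lambda>es. dualD n E c ystar - dualD n E c (cd_iter n E c es))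
         \<le> (1 - algebraic_connectivity n E / (2 * real (length E))) ^ k
             * (dualD n E c ystar - dualD n E c (0\<^sub>v (length E)))"
proof -
  note n = assms(1) and G = assms(2) and C = assms(3) and c = assms(4)
    and ystar = assms(5) and opt = assms(6)
  have m: "length E > 0" by (rule edges_nonempty[OF n C])
  obtain \<mu> where \<mu>: "algebraic_connectivity n E \<le> \<mu>" "0 \<le> \<mu>" "\<mu> \<le> 2 * real (length E)"
    and bound: "\<And>z. (\<Sum>k=0..<n. z k) = 0 \<Longrightarrow> \<mu> * sum_sq n z \<le> laplacian_form E z"
    using courant_fischer_bound[OF n G C] by blast
  have "expect_k (length E) k (\<lambda>es. dualD n E c ystar - dualD n E c (cd_iter n E c es))
      \<le> (1 - algebraic_connectivity n E / (2 * real (length E))) ^ k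
          * (dualD n E c ystar - dualD n E c (cd_iter n E c []))"
  proof (rule expect_k_contraction[OF m])
    show "0 \<le> 1 - algebraic_connectivity n E / (2 * real (length E))"
      using \<mu> m by (simp add: field_simps)
    show "(\<Sum>e=0..<length E. dualD n E c ystar - dualD n E c (cd_iter n E c (es @ [e]))) / real (length E)
        \<le> (1 - algebraic_connectivity n E / (2 * real (length E)))
            * (dualD n E c ystar - dualD n E c (cd_iter n E c es))" for es
      unfolding cd_iter_snoc using n
      by (intro expected_dual_gap_step[OF G _ c cd_iter_carrier ystar opt m \<mu>(1,2) bound]) auto
  qed
  then show ?thesis by (simp add: cd_iter_def)
qed

end
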